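(* Let $1\le m\le N$ be integers and let $(u_n)$ be a sequence of finite (real-valued) functions on $\Lambda^m$. Then there exists a finite function $U:\Lambda^N\to\mathbb R$ such that $G_{N,m}u_n\to U$ $d^Nx$-a.e. on $\Lambda^N$ if and only if there exists a finite function $u:\Lambda^m\to\mathbb R$ such that $u_n\to u$ $d^mx$-a.e. on $\Lambda^m$.
   Context: $(\Lambda;dx)$ is a complete $\sigma$-finite measure space with non-zero measure $dx$; for $k\in\mathbb N$, $d^kx$ denotes the completion of the product measure $dx^{\otimes k}$ on $\Lambda^k$, and "a.e." on $\Lambda^k$ refers to $d^kx$. For integers $1\le m\le N$ and a function $u:\Lambda^m\to\mathbb R$ (not assumed symmetric or measurable), the generalized $N$-mean of order $m$ with kernel $u$ is $$(G_{N,m}u)(x_1,\dots,x_N)=\binom{N}{m}^{-1}\sum_{1\le i_1<\cdots<i_m\le N}u(x_{i_1},\dots,x_{i_m}).$$ *)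

theory Defs
  imports "HOL-Analysis.Analysis"
begin

text \<open>Points of Lambda^k are represented as elements of PiE {..<k} (space M),
  i.e. functions nat => 'a extensional on {..<k}.  The measure d^k x is the
  completion of the k-fold product measure.\<close>

definition prod_compl :: "nat \<Rightarrow> 'a measure \<Rightarrow> (nat \<Rightarrow> 'a) measure" where
  "prod_compl k M = completion (PiM {..<k} (\<lambda>_. M))"

definition sub_tuple :: "nat set \<Rightarrow> (nat \<Rightarrow> 'a) \<Rightarrow> (nat \<Rightarrow> 'a)" where
  "sub_tuple S x = (\<lambda>j. if j < card S then x (sorted_list_of_set S ! j) else undefined)"

definition gen_mean :: "nat \<Rightarrow> nat \<Rightarrow> ((nat \<Rightarrow> 'a) \<Rightarrow> real) \<Rightarrow> (nat \<Rightarrow> 'a) \<Rightarrow> real" where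
  "gen_mean N m u x =
     (\<Sum>S \<in> {S. S \<subseteq> {..<N} \<and> card S = m}. u (sub_tuple S x)) / real (N choose m)"

end

theory Submission
  imports Defs
begin

text \<open>
  Both directions only use that G_{N,m} u is an average of copies of u with relabelled coordinates;
  no measurability is needed because a.e. statements are invariant under pulling back along an
  injective relabelling of coordinates (the unused coordinates are integrated out by Fubini, which
  is where the nonzero mass of M enters).

  The passage from G_{N,m} u_n back to u_n is proved by induction on m for weighted sums
  \<Sum>_S c_S u(x_S, x_N, \<dots>, x_(N+r-1)) over m-subsets S of {0, \<dots>, N-1} with nonnegative, not all vanishing
  weights and r extra spectator coordinates. Let p be the largest coordinate occurring in a set of
  positive weight. Replacing x_p by a fresh coordinate and subtracting kills all sets not containing p
  and leaves a weighted sum of order m - 1 of the difference kernel u(y, a, z) - u(y, b, z), which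
  therefore converges a.e. by induction. Subtracting that difference from every term of the original
  sum turns the largest element of each S into a spectator, leaving a weighted sum of order m - 1 of
  u itself, and the induction hypothesis applies once more.
\<close>

section \<open>Pulling back almost-everywhere statements along coordinate maps\<close>

definition reindex :: "nat \<Rightarrow> (nat \<Rightarrow> nat) \<Rightarrow> (nat \<Rightarrow> 'a) \<Rightarrow> nat \<Rightarrow> 'a" where
  "reindex k \<sigma> x = (\<lambda>j\<in>{..<k}. x (\<sigma> j))"

lemma reindex_reindex:
  "\<sigma> ` {..<k} \<subseteq> {..<K} \<Longrightarrow> reindex k \<sigma> (reindex K \<tau> x) = reindex k (\<tau> \<circ> \<sigma>) x"
  by (auto simp: reindex_def subset_iff)

lemma reindex_cong: "(\<And>j. j < k \<Longrightarrow> \<sigma> j = \<tau> j) \<Longrightarrow> reindex k \<sigma> x = reindex k \<tau> x"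
  by (auto simp: reindex_def)

lemma AE_measure_preserving_bij_iff:
  assumes T: "T \<in> measurable A B" and S: "S \<in> measurable B A"
    and ST: "\<And>a. a \<in> space A \<Longrightarrow> S (T a) = a"
    and TS: "\<And>b. b \<in> space B \<Longrightarrow> T (S b) = b"
    and preserving: "distr A B T = B"
  shows "(AE a in A. Q (T a)) \<longleftrightarrow> (AE b in B. Q b)"
proof
  have "distr B A S = distr A A (S \<circ> T)"
    using preserving distr_distr[OF S T] by simp
  also have "\<dots> = distr A A (\<lambda>a. a)"
    using ST by (intro distr_cong) auto
  finally have inverse_preserving: "distr B A S = A"
    by simp
  assume "AE a in A. Q (T a)"
  then have "AE a in distr B A S. Q (T a)"
    by (simp only: inverse_preserving)
  then have "AE b in B. Q (T (S b))"
    by (rule AE_distrD[OF S])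
  then show "AE b in B. Q b"
    by (rule AE_mp[OF _ AE_I2]) (simp add: TS)
next
  assume "AE b in B. Q b"
  then show "AE a in A. Q (T a)"
    by (intro AE_distrD[OF T]) (simp only: preserving)
qed

lemma AE_const_iff:
  assumes "emeasure M (space M) \<noteq> 0"
  shows "(AE x in M. P) \<longleftrightarrow> P"
  using assms by (cases P) (auto simp: AE_iff_null)

lemma AE_pair_measure_fst_iff:
  assumes "sigma_finite_measure M1" "sigma_finite_measure M2"
    and "emeasure M2 (space M2) \<noteq> 0"
  shows "(AE p in M1 \<Otimes>\<^sub>M M2. Q (fst p)) \<longleftrightarrow> (AE a in M1. Q a)"
proof
  interpret pair_sigma_finite M1 M2
    using assms by (simp add: pair_sigma_finite_def)
  assume "AE p in M1 \<Otimes>\<^sub>M M2. Q (fst p)"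
  then have "AE a in M1. AE b in M2. Q a"
    using AE_pair[of "\<lambda>p. Q (fst p)"] by simp
  then show "AE a in M1. Q a"
    using AE_const_iff[OF assms(3)] by simp
next
  interpret M2: sigma_finite_measure M2
    by fact
  assume "AE a in M1. Q a"
  then obtain N where N: "N \<in> null_sets M1" "{a \<in> space M1. \<not> Q a} \<subseteq> N"
    unfolding eventually_ae_filter by blast
  have "N \<times> space M2 \<in> null_sets (M1 \<Otimes>\<^sub>M M2)"
    using N(1) by (intro M2.times_in_null_sets1) auto
  moreover have "{p \<in> space (M1 \<Otimes>\<^sub>M M2). \<not> Q (fst p)} \<subseteq> N \<times> space M2"
    using N(2) by (auto simp: space_pair_measure)
  ultimately show "AE p in M1 \<Otimes>\<^sub>M M2. Q (fst p)"
    unfolding eventually_ae_filter by blast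
qed

lemma PiE_vimage_bij_reindex:
  assumes f: "bij_betw f I J" and A: "\<And>i. i \<in> I \<Longrightarrow> A i \<subseteq> space M"
  shows "(\<lambda>\<omega>. \<lambda>i\<in>I. \<omega> (f i)) -` Pi\<^sub>E I A \<inter> space (PiM J (\<lambda>_. M)) = Pi\<^sub>E J (\<lambda>j. A (the_inv_into I f j))"
    (is "?lhs = ?rhs")
proof (intro set_eqI iffI)
  let ?g = "the_inv_into I f"
  have g: "?g j \<in> I" "f (?g j) = j" if "j \<in> J" for j
    using f that by (auto simp: bij_betw_def the_inv_into_into f_the_inv_into_f)
  fix \<omega>
  show "\<omega> \<in> ?rhs" if "\<omega> \<in> ?lhs"
  proof (rule PiE_I)
    show "\<omega> j \<in> A (?g j)" if "j \<in> J" for j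
      using \<open>\<omega> \<in> ?lhs\<close> g[OF that] by (auto simp: PiE_iff)
    show "\<omega> j = undefined" if "j \<notin> J" for j
      using \<open>\<omega> \<in> ?lhs\<close> that by (auto simp: space_PiM PiE_iff extensional_def)
  qed
  show "\<omega> \<in> ?lhs" if \<omega>: "\<omega> \<in> ?rhs"
  proof -
    have "\<omega> \<in> space (PiM J (\<lambda>_. M))"
      unfolding space_PiM
    proof (rule PiE_I)
      show "\<omega> j \<in> space M" if "j \<in> J" for j
        using \<omega> that A[OF g(1)[OF that]] by (auto simp: PiE_iff)
      show "\<omega> j = undefined" if "j \<notin> J" for j
        using \<omega> that by (auto simp: PiE_iff extensional_def)
    qed
    moreover have "(\<lambda>i\<in>I. \<omega> (f i)) \<in> Pi\<^sub>E I A"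
      using \<omega> f by (auto simp: PiE_iff bij_betw_def the_inv_into_f_f)
    ultimately show ?thesis
      by simp
  qed
qed

locale nonzero_sigma_finite_measure = sigma_finite_measure M for M :: "'a measure" +
  assumes emeasure_space_nonzero: "emeasure M (space M) \<noteq> 0"
begin

lemma product_sigma_finite_const: "product_sigma_finite (\<lambda>_. M)"
  by (simp add: product_sigma_finite_def sigma_finite_measure_axioms)

lemma emeasure_space_PiM_nonzero:
  assumes "finite J"
  shows "emeasure (PiM J (\<lambda>_. M)) (space (PiM J (\<lambda>_. M))) \<noteq> 0"
proof -
  interpret product_sigma_finite "\<lambda>_. M"
    by (rule product_sigma_finite_const)
  have "emeasure (PiM J (\<lambda>_. M)) (Pi\<^sub>E J (\<lambda>_. space M)) = (\<Prod>i\<in>J. emeasure M (space M))"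
    using assms by (simp add: emeasure_PiM)
  then show ?thesis
    using emeasure_space_nonzero assms by (simp add: space_PiM ennreal_prod_eq_0)
qed

lemma AE_PiM_restrict_iff:
  assumes fin: "finite I" "finite J" and disjoint: "I \<inter> J = {}"
  shows "(AE x in PiM (I \<union> J) (\<lambda>_. M). Q (restrict x I)) \<longleftrightarrow> (AE a in PiM I (\<lambda>_. M). Q a)"
proof -
  interpret product_sigma_finite "\<lambda>_. M"
    by (rule product_sigma_finite_const)
  interpret I: finite_product_sigma_finite "\<lambda>_. M" I
    by standard fact
  interpret J: finite_product_sigma_finite "\<lambda>_. M" J
    by standard fact
  have "(AE x in PiM (I \<union> J) (\<lambda>_. M). Q (restrict x I))
      \<longleftrightarrow> (AE p in PiM I (\<lambda>_. M) \<Otimes>\<^sub>M PiM J (\<lambda>_. M). Q (restrict (merge I J p) I))"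
  proof (rule AE_measure_preserving_bij_iff[symmetric, where S="\<lambda>x. (restrict x I, restrict x J)"])
    show "(\<lambda>x. (restrict x I, restrict x J))
        \<in> measurable (PiM (I \<union> J) (\<lambda>_. M)) (PiM I (\<lambda>_. M) \<Otimes>\<^sub>M PiM J (\<lambda>_. M))"
      by (intro measurable_Pair measurable_restrict_subset) auto
    show "(restrict (merge I J p) I, restrict (merge I J p) J) = p"
      if "p \<in> space (PiM I (\<lambda>_. M) \<Otimes>\<^sub>M PiM J (\<lambda>_. M))" for p
      using that disjoint
      by (cases p) (auto simp: space_pair_measure space_PiM PiE_iff intro!: restrict_ext extensional_restrict)
    show "merge I J (restrict x I, restrict x J) = x" if "x \<in> space (PiM (I \<union> J) (\<lambda>_. M))" for x
      using that by (auto simp: space_PiM)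
  qed (simp_all add: measurable_merge distr_merge[OF disjoint fin])
  also have "\<dots> \<longleftrightarrow> (AE p in PiM I (\<lambda>_. M) \<Otimes>\<^sub>M PiM J (\<lambda>_. M). Q (fst p))"
    using disjoint
    by (intro AE_cong) (auto simp: space_pair_measure space_PiM PiE_iff)
  also have "\<dots> \<longleftrightarrow> (AE a in PiM I (\<lambda>_. M). Q a)"
    by (rule AE_pair_measure_fst_iff[OF I.sigma_finite_measure_axioms J.sigma_finite_measure_axioms
          emeasure_space_PiM_nonzero[OF fin(2)]])
  finally show ?thesis .
qed

lemma distr_PiM_bij_reindex:
  assumes f: "bij_betw f I J" and fin: "finite I"
  shows "distr (PiM J (\<lambda>_. M)) (PiM I (\<lambda>_. M)) (\<lambda>\<omega>. \<lambda>i\<in>I. \<omega> (f i)) = PiM I (\<lambda>_. M)"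
proof -
  interpret product_sigma_finite "\<lambda>_. M"
    by (rule product_sigma_finite_const)
  let ?g = "the_inv_into I f"
  have finJ: "finite J"
    using f fin bij_betw_finite by blast
  have meas: "(\<lambda>\<omega>. \<lambda>i\<in>I. \<omega> (f i)) \<in> measurable (PiM J (\<lambda>_. M)) (PiM I (\<lambda>_. M))"
    using f by (auto intro!: measurable_restrict measurable_component_singleton simp: bij_betw_def)
  show ?thesis
  proof (rule PiM_eqI[OF fin])
    fix A assume A: "\<And>i. i \<in> I \<Longrightarrow> A i \<in> sets M"
    have AJ: "A (?g j) \<in> sets M" if "j \<in> J" for j
      using A f that by (simp add: bij_betw_def the_inv_into_into)
    have "emeasure (distr (PiM J (\<lambda>_. M)) (PiM I (\<lambda>_. M)) (\<lambda>\<omega>. \<lambda>i\<in>I. \<omega> (f i))) (Pi\<^sub>E I A)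
        = emeasure (PiM J (\<lambda>_. M)) (Pi\<^sub>E J (\<lambda>j. A (?g j)))"
      using meas A
      by (simp add: emeasure_distr sets_PiM_I_finite fin PiE_vimage_bij_reindex[OF f sets.sets_into_space[OF A]])
    also have "\<dots> = (\<Prod>j\<in>J. emeasure M (A (?g j)))"
      using AJ finJ by (simp add: emeasure_PiM)
    also have "\<dots> = (\<Prod>i\<in>I. emeasure M (A i))"
      using f by (subst prod.reindex_bij_betw[symmetric, OF f])
        (auto intro!: prod.cong simp: bij_betw_def the_inv_into_f_f)
    finally show "emeasure (distr (PiM J (\<lambda>_. M)) (PiM I (\<lambda>_. M)) (\<lambda>\<omega>. \<lambda>i\<in>I. \<omega> (f i))) (Pi\<^sub>E I A)
        = (\<Prod>i\<in>I. emeasure M (A i))" .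
  qed simp
qed

lemma AE_PiM_reindex_iff:
  assumes inj: "inj_on \<sigma> {..<k}" and range: "\<sigma> ` {..<k} \<subseteq> {..<K}"
  shows "(AE x in PiM {..<K} (\<lambda>_. M). Q (reindex k \<sigma> x)) \<longleftrightarrow> (AE y in PiM {..<k} (\<lambda>_. M). Q y)"
proof -
  define J where "J = \<sigma> ` {..<k}"
  have K: "{..<K} = J \<union> ({..<K} - J)"
    using range J_def by auto
  have bij: "bij_betw \<sigma> {..<k} J"
    using inj J_def by (simp add: bij_betw_def)
  have inv: "the_inv_into {..<k} \<sigma> (\<sigma> i) = i" if "i < k" for i
    using inj that by (simp add: the_inv_into_f_f)
  have "reindex k \<sigma> (restrict x J) = reindex k \<sigma> x" for x :: "nat \<Rightarrow> 'a"
    using J_def by (auto simp: reindex_def)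
  then have "(AE x in PiM {..<K} (\<lambda>_. M). Q (reindex k \<sigma> x))
      \<longleftrightarrow> (AE x in PiM {..<K} (\<lambda>_. M). Q (reindex k \<sigma> (restrict x J)))"
    by simp
  also have "\<dots> \<longleftrightarrow> (AE a in PiM J (\<lambda>_. M). Q (reindex k \<sigma> a))"
    by (subst K) (rule AE_PiM_restrict_iff, auto simp: J_def)
  also have "\<dots> \<longleftrightarrow> (AE y in PiM {..<k} (\<lambda>_. M). Q y)"
  proof (rule AE_measure_preserving_bij_iff[where S="\<lambda>y. \<lambda>j\<in>J. y (the_inv_into {..<k} \<sigma> j)"])
    show "reindex k \<sigma> \<in> measurable (PiM J (\<lambda>_. M)) (PiM {..<k} (\<lambda>_. M))"
      unfolding reindex_def using J_def
      by (auto intro!: measurable_restrict measurable_component_singleton)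
    show "(\<lambda>y. \<lambda>j\<in>J. y (the_inv_into {..<k} \<sigma> j)) \<in> measurable (PiM {..<k} (\<lambda>_. M)) (PiM J (\<lambda>_. M))"
      using J_def inv by (auto intro!: measurable_restrict measurable_component_singleton)
    show "(\<lambda>j\<in>J. reindex k \<sigma> a (the_inv_into {..<k} \<sigma> j)) = a" if "a \<in> space (PiM J (\<lambda>_. M))" for a
    proof
      fix j show "(\<lambda>j\<in>J. reindex k \<sigma> a (the_inv_into {..<k} \<sigma> j)) j = a j"
        using that J_def inv by (cases "j \<in> J") (auto simp: reindex_def space_PiM PiE_iff extensional_def)
    qed
    show "reindex k \<sigma> (\<lambda>j\<in>J. b (the_inv_into {..<k} \<sigma> j)) = b" if "b \<in> space (PiM {..<k} (\<lambda>_. M))" for b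
    proof
      fix i show "reindex k \<sigma> (\<lambda>j\<in>J. b (the_inv_into {..<k} \<sigma> j)) i = b i"
        using that J_def inv by (cases "i < k") (auto simp: reindex_def space_PiM PiE_iff extensional_def)
    qed
    show "distr (PiM J (\<lambda>_. M)) (PiM {..<k} (\<lambda>_. M)) (reindex k \<sigma>) = PiM {..<k} (\<lambda>_. M)"
      unfolding reindex_def[abs_def] lessThan_def[symmetric] by (rule distr_PiM_bij_reindex[OF bij]) simp
  qed
  finally show ?thesis .
qed

end

definition ae_convergent :: "'a measure \<Rightarrow> nat \<Rightarrow> (nat \<Rightarrow> (nat \<Rightarrow> 'a) \<Rightarrow> real) \<Rightarrow> bool" where
  "ae_convergent M K f \<longleftrightarrow> (AE x in PiM {..<K} (\<lambda>_. M). convergent (\<lambda>n. f n x))"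

lemma ae_convergent_add:
  assumes "ae_convergent M K f" "ae_convergent M K g"
  shows "ae_convergent M K (\<lambda>n x. f n x + g n x)"
  using assms unfolding ae_convergent_def by eventually_elim (rule convergent_add)

lemma ae_convergent_diff:
  assumes "ae_convergent M K f" "ae_convergent M K g"
  shows "ae_convergent M K (\<lambda>n x. f n x - g n x)"
  using assms unfolding ae_convergent_def by eventually_elim (rule convergent_diff)

lemma ae_convergent_cmult:
  assumes "ae_convergent M K f"
  shows "ae_convergent M K (\<lambda>n x. c * f n x)"
  using assms unfolding ae_convergent_def by eventually_elim (intro convergent_mult convergent_const)

lemma ae_convergent_sum:
  "finite A \<Longrightarrow> (\<And>a. a \<in> A \<Longrightarrow> ae_convergent M K (f a)) \<Longrightarrow>
    ae_convergent M K (\<lambda>n x. \<Sum>a\<in>A. f a n x)"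
proof (induction A rule: finite_induct)
  case empty
  show ?case
    by (simp add: ae_convergent_def convergent_const)
qed (simp add: ae_convergent_add)

lemma (in nonzero_sigma_finite_measure) ae_convergent_reindex_iff:
  "inj_on \<sigma> {..<k} \<Longrightarrow> \<sigma> ` {..<k} \<subseteq> {..<K} \<Longrightarrow>
    ae_convergent M K (\<lambda>n x. f n (reindex k \<sigma> x)) \<longleftrightarrow> ae_convergent M k f"
  unfolding ae_convergent_def by (rule AE_PiM_reindex_iff)

section \<open>Subsets and coordinate patterns\<close>

definition card_subsets :: "nat \<Rightarrow> nat \<Rightarrow> nat set set" where
  "card_subsets N m = {S. S \<subseteq> {..<N} \<and> card S = m}"

lemma finite_card_subsets: "finite (card_subsets N m)"
  unfolding card_subsets_def by (rule finite_subset[of _ "Pow {..<N}"]) auto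

lemma card_subsetsD:
  assumes "S \<in> card_subsets N m"
  shows "finite S" "S \<subseteq> {..<N}" "card S = m"
  using assms finite_subset[of S "{..<N}"] by (auto simp: card_subsets_def)

lemma card_subsets_remove_Max:
  assumes "S \<in> card_subsets N (Suc m)"
  shows "S - {Max S} \<in> card_subsets N m" "S = insert (Max S) (S - {Max S})"
    and "\<And>s. s \<in> S - {Max S} \<Longrightarrow> s < Max S"
proof -
  have S: "finite S" "S \<noteq> {}" "S \<subseteq> {..<N}" "card S = Suc m"
    using card_subsetsD[OF assms] by auto
  have max: "Max S \<in> S"
    using S(1,2) by (rule Max_in)
  show "S - {Max S} \<in> card_subsets N m"
    using S(1,3,4) card_Diff_singleton[OF max] by (auto simp: card_subsets_def)
  show "S = insert (Max S) (S - {Max S})"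
    using max by blast
  show "s < Max S" if "s \<in> S - {Max S}" for s
    using that Max_ge[OF S(1), of s] by auto
qed

lemma sum_card_subsets_insert_greatest:
  fixes f :: "nat set \<Rightarrow> 'b::comm_monoid_add"
  assumes "p < N" and support: "\<And>S. S \<in> card_subsets N (Suc m) \<Longrightarrow> f S \<noteq> 0 \<Longrightarrow> p \<in> S \<and> S \<subseteq> {..p}"
  shows "(\<Sum>S\<in>card_subsets N (Suc m). f S) = (\<Sum>S\<in>card_subsets p m. f (insert p S))"
proof -
  have "insert p S \<in> card_subsets N (Suc m)" if "S \<in> card_subsets p m" for S
  proof -
    have "finite S" "S \<subseteq> {..<p}" "card S = m"
      using card_subsetsD[OF that] by auto
    moreover have "p \<notin> S"
      using \<open>S \<subseteq> {..<p}\<close> by auto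
    ultimately show ?thesis
      using \<open>p < N\<close> by (auto simp: card_subsets_def)
  qed
  then have inserted: "insert p ` card_subsets p m \<subseteq> card_subsets N (Suc m)"
    by (simp add: image_subset_iff)
  have "(\<Sum>S\<in>card_subsets N (Suc m). f S) = (\<Sum>S\<in>insert p ` card_subsets p m. f S)"
  proof (rule sum.mono_neutral_right[OF finite_card_subsets inserted])
    show "\<forall>S\<in>card_subsets N (Suc m) - insert p ` card_subsets p m. f S = 0"
    proof (rule ballI, rule ccontr)
      fix S assume S: "S \<in> card_subsets N (Suc m) - insert p ` card_subsets p m" and "f S \<noteq> 0"
      then have "p \<in> S" "S \<subseteq> {..p}"
        using support[of S] by simp_all
      moreover have "finite S" "card S = Suc m"
        using S card_subsetsD[of S N "Suc m"] by simp_all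
      ultimately have "S - {p} \<in> card_subsets p m"
        unfolding card_subsets_def by (auto simp: subset_eq nat_less_le)
      moreover have "S = insert p (S - {p})"
        using \<open>p \<in> S\<close> by (simp add: insert_absorb)
      ultimately have "S \<in> insert p ` card_subsets p m"
        by (rule rev_image_eqI)
      then show False
        using S by simp
    qed
  qed
  also have "\<dots> = (\<Sum>S\<in>card_subsets p m. f (insert p S))"
    by (rule sum.reindex[unfolded comp_def]) (auto simp: inj_on_def card_subsets_def)
  finally show ?thesis .
qed

lemma sorted_list_of_set_insert_greater:
  assumes "finite S" "\<And>s. s \<in> S \<Longrightarrow> s < p"
  shows "sorted_list_of_set (insert p S) = sorted_list_of_set S @ [p]"
  using assms
  by (intro sorted_list_of_set_unique[THEN iffD1])
    (auto simp: sorted_wrt_append card_insert_if strict_sorted_list_of_set)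

text \<open>
  Argument j of a kernel with m + r arguments reads the coordinate kernel_coord N m S j:
  the elements of S in increasing order, followed by the spectator coordinates N, \<dots>, N + r - 1.
\<close>

definition kernel_coord :: "nat \<Rightarrow> nat \<Rightarrow> nat set \<Rightarrow> nat \<Rightarrow> nat" where
  "kernel_coord N m S j = (if j < m then sorted_list_of_set S ! j else N + (j - m))"

definition skip :: "nat \<Rightarrow> nat \<Rightarrow> nat" where
  "skip i j = (if j < i then j else Suc j)"

lemma skip_image_lessThan: "skip i ` {..<k} \<subseteq> {..<Suc k}"
  by (auto simp: skip_def)

lemma kernel_coord_mem:
  assumes "S \<in> card_subsets N m" "j < m"
  shows "kernel_coord N m S j \<in> S"
proof -
  have "sorted_list_of_set S ! j \<in> set (sorted_list_of_set S)"
    using assms card_subsetsD[OF assms(1)] by (intro nth_mem) simp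
  then show ?thesis
    using assms card_subsetsD[OF assms(1)] by (simp add: kernel_coord_def)
qed

lemma kernel_coord_less:
  assumes "S \<in> card_subsets N m" "j < m + r"
  shows "kernel_coord N m S j < N + r"
proof (cases "j < m")
  case True
  then have "kernel_coord N m S j < N"
    using kernel_coord_mem[OF assms(1)] card_subsetsD(2)[OF assms(1)] by auto
  then show ?thesis
    by simp
qed (use assms in \<open>simp add: kernel_coord_def\<close>)

lemma inj_on_kernel_coord:
  assumes "S \<in> card_subsets N m"
  shows "inj_on (kernel_coord N m S) {..<m + r}"
proof (rule inj_onI)
  fix i j assume ij: "i \<in> {..<m + r}" "j \<in> {..<m + r}" "kernel_coord N m S i = kernel_coord N m S j"
  have "distinct (sorted_list_of_set S)" "length (sorted_list_of_set S) = m"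
    using card_subsetsD[OF assms] by simp_all
  moreover have "kernel_coord N m S k < N" if "k < m" for k
    using kernel_coord_mem[OF assms that] card_subsetsD(2)[OF assms] by auto
  ultimately show "i = j"
    using ij by (cases "i < m"; cases "j < m"; fastforce simp: kernel_coord_def nth_eq_iff_index_eq)
qed

lemma kernel_coord_image:
  "S \<in> card_subsets N m \<Longrightarrow> kernel_coord N m S ` {..<m + r} \<subseteq> {..<N + r}"
  using kernel_coord_less by blast

lemma kernel_coord_skip:
  assumes "S \<in> card_subsets N m"
  shows "skip N (kernel_coord N m S j) = kernel_coord N m S (skip m j)"
  using kernel_coord_less[OF assms, of j 0] by (auto simp: skip_def kernel_coord_def)

lemma kernel_coord_insert_greater:
  assumes "finite S" "\<And>s. s \<in> S \<Longrightarrow> s < p" "card S = m"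
  shows "kernel_coord N (Suc m) (insert p S) j
    = (if j < m then kernel_coord N m S j else if j = m then p else N + (j - Suc m))"
  using assms(1,3) sorted_list_of_set_insert_greater[OF assms(1,2)]
  by (simp add: kernel_coord_def nth_append del: sorted_list_of_set.sorted_key_list_of_set_insert_remove)

lemma kernel_coord_skip_remove_Max:
  assumes "S \<in> card_subsets N (Suc m)"
  shows "kernel_coord N (Suc m) S (skip m j) = kernel_coord N m (S - {Max S}) j"
proof -
  let ?S' = "S - {Max S}"
  have S': "finite ?S'" "card ?S' = m"
    using card_subsetsD[OF card_subsets_remove_Max(1)[OF assms]] by simp_all
  have "kernel_coord N (Suc m) (insert (Max S) ?S') (skip m j) = kernel_coord N m ?S' j"
    using S' card_subsets_remove_Max(3)[OF assms]
    by (subst kernel_coord_insert_greater) (auto simp: skip_def kernel_coord_def)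
  then show ?thesis
    using card_subsets_remove_Max(2)[OF assms] by simp
qed

definition pivot_coord :: "nat \<Rightarrow> nat \<Rightarrow> nat \<Rightarrow> nat \<Rightarrow> nat" where
  "pivot_coord p N r i = (if i \<le> p then i else if i = Suc p then N + r else N + (i - Suc (Suc p)))"

lemma kernel_coord_insert_pivot:
  assumes S': "S' \<in> card_subsets p m" and "p < N"
  shows "kernel_coord N (Suc m) (insert p S') j = pivot_coord p N r (kernel_coord p m S' (skip (Suc m) j))"
    and "(id(p := N + r)) (kernel_coord N (Suc m) (insert p S') j)
      = pivot_coord p N r (kernel_coord p m S' (skip m j))"
proof -
  have "finite S'" "card S' = m" "\<And>s. s \<in> S' \<Longrightarrow> s < p"
    using card_subsetsD[OF S'] by auto
  note insert = kernel_coord_insert_greater[OF this(1,3,2)]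
  have small: "kernel_coord p m S' j < p" if "j < m"
    using kernel_coord_less[OF S', of j 0] that by simp
  show "kernel_coord N (Suc m) (insert p S') j = pivot_coord p N r (kernel_coord p m S' (skip (Suc m) j))"
    using small \<open>p < N\<close> by (subst insert) (auto simp: skip_def pivot_coord_def kernel_coord_def)
  show "(id(p := N + r)) (kernel_coord N (Suc m) (insert p S') j)
      = pivot_coord p N r (kernel_coord p m S' (skip m j))"
    using small \<open>p < N\<close> by (subst insert) (auto simp: skip_def pivot_coord_def kernel_coord_def)
qed

section \<open>Weighted sums of relabelled kernels\<close>

definition weighted_sum ::
    "nat \<Rightarrow> nat \<Rightarrow> nat \<Rightarrow> (nat set \<Rightarrow> real) \<Rightarrow> (nat \<Rightarrow> (nat \<Rightarrow> 'a) \<Rightarrow> real) \<Rightarrow> nat \<Rightarrow> (nat \<Rightarrow> 'a) \<Rightarrow> real" where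
  "weighted_sum N m r c u n x = (\<Sum>S\<in>card_subsets N m. c S * u n (reindex (m + r) (kernel_coord N m S) x))"

definition admissible_weights :: "nat \<Rightarrow> nat \<Rightarrow> (nat set \<Rightarrow> real) \<Rightarrow> bool" where
  "admissible_weights N m c \<longleftrightarrow> (\<forall>S. 0 \<le> c S) \<and> (\<exists>S\<in>card_subsets N m. 0 < c S)"

text \<open>The kernel's argument i is taken from w_i in the first term and from w_(i+1) in the second.\<close>

definition kernel_difference ::
    "nat \<Rightarrow> nat \<Rightarrow> (nat \<Rightarrow> (nat \<Rightarrow> 'a) \<Rightarrow> real) \<Rightarrow> nat \<Rightarrow> (nat \<Rightarrow> 'a) \<Rightarrow> real" where
  "kernel_difference k i u n w = u n (reindex k (skip (Suc i)) w) - u n (reindex k (skip i) w)"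

lemma kernel_difference_remove_Max:
  assumes S: "S \<in> card_subsets N (Suc m)"
  shows "kernel_difference (Suc m + r) m u n (reindex (Suc m + Suc r) (kernel_coord N (Suc m) S) x)
    = u n (reindex (Suc m + r) (kernel_coord N (Suc m) S) (reindex (N + r) (skip N) x))
      - u n (reindex (m + Suc r) (kernel_coord N m (S - {Max S})) x)"
proof -
  have "reindex (Suc m + r) (skip (Suc m)) (reindex (Suc m + Suc r) (kernel_coord N (Suc m) S) x)
      = reindex (Suc m + r) (kernel_coord N (Suc m) S \<circ> skip (Suc m)) x"
    using skip_image_lessThan[of "Suc m" "Suc m + r"] by (simp add: reindex_reindex)
  also have "\<dots> = reindex (Suc m + r) (skip N \<circ> kernel_coord N (Suc m) S) x"
    by (rule reindex_cong) (simp add: kernel_coord_skip[OF S])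
  also have "\<dots> = reindex (Suc m + r) (kernel_coord N (Suc m) S) (reindex (N + r) (skip N) x)"
    by (rule reindex_reindex[symmetric, OF kernel_coord_image[OF S]])
  finally have first: "reindex (Suc m + r) (skip (Suc m)) (reindex (Suc m + Suc r) (kernel_coord N (Suc m) S) x)
      = reindex (Suc m + r) (kernel_coord N (Suc m) S) (reindex (N + r) (skip N) x)" .
  have "reindex (Suc m + r) (skip m) (reindex (Suc m + Suc r) (kernel_coord N (Suc m) S) x)
      = reindex (Suc m + r) (kernel_coord N (Suc m) S \<circ> skip m) x"
    using skip_image_lessThan[of m "Suc m + r"] by (simp add: reindex_reindex)
  also have "\<dots> = reindex (m + Suc r) (kernel_coord N m (S - {Max S})) x"
    using reindex_cong[of "Suc m + r" "kernel_coord N (Suc m) S \<circ> skip m" "kernel_coord N m (S - {Max S})"]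
    by (simp add: kernel_coord_skip_remove_Max[OF S])
  finally show ?thesis
    using first by (simp add: kernel_difference_def)
qed

lemma weighted_sum_remove_Max:
  "weighted_sum N (Suc m) r c u n (reindex (N + r) (skip N) x)
      - weighted_sum N (Suc m) (Suc r) c (kernel_difference (Suc m + r) m u) n x
    = weighted_sum N m (Suc r) (\<lambda>S'. \<Sum>S\<in>{S \<in> card_subsets N (Suc m). S - {Max S} = S'}. c S) u n x"
proof -
  have "weighted_sum N (Suc m) r c u n (reindex (N + r) (skip N) x)
      - weighted_sum N (Suc m) (Suc r) c (kernel_difference (Suc m + r) m u) n x
      = (\<Sum>S\<in>card_subsets N (Suc m). c S * (u n (reindex (Suc m + r) (kernel_coord N (Suc m) S) (reindex (N + r) (skip N) x))
          - kernel_difference (Suc m + r) m u n (reindex (Suc m + Suc r) (kernel_coord N (Suc m) S) x)))"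
    by (simp add: weighted_sum_def right_diff_distrib sum_subtractf)
  also have "\<dots> = (\<Sum>S\<in>card_subsets N (Suc m). c S * u n (reindex (m + Suc r) (kernel_coord N m (S - {Max S})) x))"
    by (rule sum.cong[OF refl]) (simp only: kernel_difference_remove_Max, simp)
  also have "\<dots> = (\<Sum>S'\<in>card_subsets N m. \<Sum>S\<in>{S \<in> card_subsets N (Suc m). S - {Max S} = S'}.
      c S * u n (reindex (m + Suc r) (kernel_coord N m (S - {Max S})) x))"
    by (rule sum.group[OF finite_card_subsets finite_card_subsets, symmetric])
      (auto intro: card_subsets_remove_Max(1))
  also have "\<dots> = weighted_sum N m (Suc r) (\<lambda>S'. \<Sum>S\<in>{S \<in> card_subsets N (Suc m). S - {Max S} = S'}. c S) u n x"
    unfolding weighted_sum_def sum_distrib_right by (intro sum.cong refl) auto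
  finally show ?thesis .
qed

lemma kernel_difference_pivot:
  assumes S': "S' \<in> card_subsets p m" and "p < N"
  shows "kernel_difference (Suc m + r) m u n
      (reindex (m + Suc (Suc r)) (kernel_coord p m S') (reindex (p + Suc (Suc r)) (pivot_coord p N r) x))
    = u n (reindex (Suc m + r) (kernel_coord N (Suc m) (insert p S')) x)
      - u n (reindex (Suc m + r) (id(p := N + r) \<circ> kernel_coord N (Suc m) (insert p S')) x)"
proof -
  have "reindex (m + Suc (Suc r)) (kernel_coord p m S') (reindex (p + Suc (Suc r)) (pivot_coord p N r) x)
      = reindex (m + Suc (Suc r)) (pivot_coord p N r \<circ> kernel_coord p m S') x"
    by (rule reindex_reindex[OF kernel_coord_image[OF S']])
  then have "reindex (Suc m + r) (skip i)
      (reindex (m + Suc (Suc r)) (kernel_coord p m S') (reindex (p + Suc (Suc r)) (pivot_coord p N r) x))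
    = reindex (Suc m + r) (pivot_coord p N r \<circ> kernel_coord p m S' \<circ> skip i) x" for i
    using skip_image_lessThan[of i "Suc m + r"] by (simp add: reindex_reindex comp_assoc)
  moreover have "reindex (Suc m + r) (kernel_coord N (Suc m) (insert p S')) x
      = reindex (Suc m + r) (pivot_coord p N r \<circ> kernel_coord p m S' \<circ> skip (Suc m)) x"
    by (rule reindex_cong) (simp add: kernel_coord_insert_pivot(1)[OF S' \<open>p < N\<close>])
  moreover have "reindex (Suc m + r) (id(p := N + r) \<circ> kernel_coord N (Suc m) (insert p S')) x
      = reindex (Suc m + r) (pivot_coord p N r \<circ> kernel_coord p m S' \<circ> skip m) x"
    by (rule reindex_cong) (simp only: comp_apply kernel_coord_insert_pivot(2)[OF S' \<open>p < N\<close>])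
  ultimately show ?thesis
    by (simp add: kernel_difference_def)
qed

lemma admissible_weights_greatest:
  assumes adm: "admissible_weights N (Suc m) c"
  obtains p S1 where "p < N" "S1 \<in> card_subsets N (Suc m)" "0 < c S1" "p \<in> S1"
    "\<And>S. S \<in> card_subsets N (Suc m) \<Longrightarrow> c S \<noteq> 0 \<Longrightarrow> S \<subseteq> {..p}"
proof -
  define A where "A = {S \<in> card_subsets N (Suc m). 0 < c S}"
  have fin: "finite (\<Union>A)"
    using finite_card_subsets card_subsetsD(1) by (auto simp: A_def)
  obtain S0 where S0: "S0 \<in> A"
    using adm by (auto simp: admissible_weights_def A_def)
  then have "S0 \<noteq> {}"
    using card_subsetsD(3)[of S0 N "Suc m"] by (auto simp: A_def)
  then have "Max (\<Union>A) \<in> \<Union>A"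
    using fin S0 by (intro Max_in) auto
  then obtain S1 where S1: "S1 \<in> card_subsets N (Suc m)" "0 < c S1" "Max (\<Union>A) \<in> S1"
    by (auto simp: A_def)
  moreover have "Max (\<Union>A) < N"
    using S1 card_subsetsD(2) by blast
  moreover have "S \<subseteq> {..Max (\<Union>A)}" if "S \<in> card_subsets N (Suc m)" "c S \<noteq> 0" for S
  proof -
    have "S \<in> A"
      using that adm by (auto simp: A_def admissible_weights_def order.order_iff_strict)
    then show ?thesis
      using Max_ge[OF fin] by blast
  qed
  ultimately show ?thesis
    using that by blast
qed

text \<open>
  Moving x_p to the fresh coordinate N + r changes only the terms whose set contains p, and those
  of nonzero weight are insert p S' with S' \<subseteq> {..<p}.
\<close>

lemma weighted_sum_pivot:
  assumes "p < N" and support: "\<And>S. S \<in> card_subsets N (Suc m) \<Longrightarrow> c S \<noteq> 0 \<Longrightarrow> S \<subseteq> {..p}"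
  shows "weighted_sum N (Suc m) r c u n (reindex (N + r) id x)
      - weighted_sum N (Suc m) r c u n (reindex (N + r) (id(p := N + r)) x)
    = weighted_sum p m (Suc (Suc r)) (\<lambda>S'. c (insert p S')) (kernel_difference (Suc m + r) m u) n
        (reindex (p + Suc (Suc r)) (pivot_coord p N r) x)"
proof -
  define f where "f S = c S * (u n (reindex (Suc m + r) (kernel_coord N (Suc m) S) x)
      - u n (reindex (Suc m + r) (id(p := N + r) \<circ> kernel_coord N (Suc m) S) x))" for S
  have "weighted_sum N (Suc m) r c u n (reindex (N + r) id x)
      - weighted_sum N (Suc m) r c u n (reindex (N + r) (id(p := N + r)) x)
      = (\<Sum>S\<in>card_subsets N (Suc m). f S)"
    unfolding weighted_sum_def f_def right_diff_distrib sum_subtractf[symmetric]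
    by (rule sum.cong[OF refl]) (simp add: reindex_reindex[OF kernel_coord_image] del: add_Suc fun_upd_apply)
  also have "\<dots> = (\<Sum>S'\<in>card_subsets p m. f (insert p S'))"
  proof (rule sum_card_subsets_insert_greatest[OF \<open>p < N\<close>])
    fix S assume S: "S \<in> card_subsets N (Suc m)" and "f S \<noteq> 0"
    then have "c S \<noteq> 0" and moved: "reindex (Suc m + r) (id(p := N + r) \<circ> kernel_coord N (Suc m) S) x
        \<noteq> reindex (Suc m + r) (kernel_coord N (Suc m) S) x"
      by (auto simp: f_def)
    have "p \<in> S"
    proof (rule ccontr)
      assume "p \<notin> S"
      then have "kernel_coord N (Suc m) S j \<noteq> p" for j
        using kernel_coord_mem[OF S, of j] \<open>p < N\<close> by (cases "j < Suc m") (auto simp: kernel_coord_def)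
      then show False
        using moved reindex_cong[of "Suc m + r" "id(p := N + r) \<circ> kernel_coord N (Suc m) S"] by auto
    qed
    then show "p \<in> S \<and> S \<subseteq> {..p}"
      using support[OF S \<open>c S \<noteq> 0\<close>] by simp
  qed
  also have "\<dots> = weighted_sum p m (Suc (Suc r)) (\<lambda>S'. c (insert p S')) (kernel_difference (Suc m + r) m u) n
      (reindex (p + Suc (Suc r)) (pivot_coord p N r) x)"
    unfolding weighted_sum_def f_def
    by (rule sum.cong[OF refl]) (simp only: kernel_difference_pivot[OF _ \<open>p < N\<close>])
  finally show ?thesis .
qed

context nonzero_sigma_finite_measure
begin

lemma ae_convergent_weighted_sum:
  assumes "ae_convergent M (m + r) u"
  shows "ae_convergent M (N + r) (weighted_sum N m r c u)"
  unfolding weighted_sum_def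
  by (intro ae_convergent_sum finite_card_subsets ae_convergent_cmult
      ae_convergent_reindex_iff[THEN iffD2] inj_on_kernel_coord kernel_coord_image assms)

lemma ae_convergent_weighted_sum_zero:
  assumes adm: "admissible_weights N 0 c" and W: "ae_convergent M (N + r) (weighted_sum N 0 r c u)"
  shows "ae_convergent M r u"
proof -
  have "card_subsets N 0 = {{}}"
    using finite_subset[OF _ finite_lessThan[of N]] by (auto simp: card_subsets_def)
  then have "0 < c {}" and W_eq: "weighted_sum N 0 r c u n x = c {} * u n (reindex r ((+) N) x)" for n x
    using adm by (auto simp: admissible_weights_def weighted_sum_def kernel_coord_def reindex_def)
  have "ae_convergent M (N + r) (\<lambda>n x. inverse (c {}) * weighted_sum N 0 r c u n x)"
    using W by (rule ae_convergent_cmult)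
  then have "ae_convergent M (N + r) (\<lambda>n x. u n (reindex r ((+) N) x))"
    using \<open>0 < c {}\<close> by (simp add: W_eq mult.assoc[symmetric])
  then show ?thesis
    by (subst (asm) ae_convergent_reindex_iff) auto
qed

lemma ae_convergent_weighted_sum_pivot:
  assumes adm: "admissible_weights N (Suc m) c"
    and W: "ae_convergent M (N + r) (weighted_sum N (Suc m) r c u)"
  obtains p c' where "admissible_weights p m c'"
    "ae_convergent M (p + Suc (Suc r)) (weighted_sum p m (Suc (Suc r)) c' (kernel_difference (Suc m + r) m u))"
proof -
  obtain p S1 where "p < N" and S1: "S1 \<in> card_subsets N (Suc m)" "0 < c S1" "p \<in> S1"
    and support: "\<And>S. S \<in> card_subsets N (Suc m) \<Longrightarrow> c S \<noteq> 0 \<Longrightarrow> S \<subseteq> {..p}"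
    using admissible_weights_greatest[OF adm] by blast
  have "ae_convergent M (N + Suc r) (\<lambda>n x. weighted_sum N (Suc m) r c u n (reindex (N + r) id x)
      - weighted_sum N (Suc m) r c u n (reindex (N + r) (id(p := N + r)) x))"
    using \<open>p < N\<close>
    by (intro ae_convergent_diff ae_convergent_reindex_iff[THEN iffD2, OF _ _ W]) (auto simp: inj_on_def)
  then have "ae_convergent M (N + Suc r) (\<lambda>n x. weighted_sum p m (Suc (Suc r)) (\<lambda>S'. c (insert p S'))
      (kernel_difference (Suc m + r) m u) n (reindex (p + Suc (Suc r)) (pivot_coord p N r) x))"
    by (simp add: weighted_sum_pivot[OF \<open>p < N\<close> support] del: fun_upd_apply)
  then have "ae_convergent M (p + Suc (Suc r))
      (weighted_sum p m (Suc (Suc r)) (\<lambda>S'. c (insert p S')) (kernel_difference (Suc m + r) m u))"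
    using \<open>p < N\<close>
    by (subst (asm) ae_convergent_reindex_iff) (auto simp: inj_on_def pivot_coord_def split: if_splits)
  moreover have "admissible_weights p m (\<lambda>S'. c (insert p S'))"
  proof -
    have "S1 - {p} \<in> card_subsets p m"
      using S1 support[OF S1(1)] card_subsetsD[OF S1(1)] by (auto simp: card_subsets_def nat_less_le)
    then show ?thesis
      using S1(2,3) adm
      by (auto simp: admissible_weights_def insert_absorb intro!: bexI[of _ "S1 - {p}"])
  qed
  ultimately show ?thesis
    using that by blast
qed

lemma ae_convergent_weighted_sum_remove_Max:
  assumes adm: "admissible_weights N (Suc m) c"
    and W: "ae_convergent M (N + r) (weighted_sum N (Suc m) r c u)"
    and D: "ae_convergent M (Suc m + Suc r) (kernel_difference (Suc m + r) m u)"
  obtains c' where "admissible_weights N m c'" "ae_convergent M (N + Suc r) (weighted_sum N m (Suc r) c' u)"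
proof
  define c' where "c' S' = (\<Sum>S\<in>{S \<in> card_subsets N (Suc m). S - {Max S} = S'}. c S)" for S'
  have "ae_convergent M (N + Suc r) (\<lambda>n x. weighted_sum N (Suc m) r c u n (reindex (N + r) (skip N) x))"
    by (rule ae_convergent_reindex_iff[THEN iffD2, OF _ _ W]) (auto simp: skip_def inj_on_def)
  moreover have "ae_convergent M (N + Suc r) (weighted_sum N (Suc m) (Suc r) c (kernel_difference (Suc m + r) m u))"
    using D by (rule ae_convergent_weighted_sum)
  ultimately have "ae_convergent M (N + Suc r) (\<lambda>n x. weighted_sum N (Suc m) r c u n (reindex (N + r) (skip N) x)
      - weighted_sum N (Suc m) (Suc r) c (kernel_difference (Suc m + r) m u) n x)"
    by (rule ae_convergent_diff)
  then show "ae_convergent M (N + Suc r) (weighted_sum N m (Suc r) c' u)"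
    unfolding weighted_sum_remove_Max c'_def .
  obtain S0 where S0: "S0 \<in> card_subsets N (Suc m)" "0 < c S0"
    using adm by (auto simp: admissible_weights_def)
  have "c S0 \<le> c' (S0 - {Max S0})"
    unfolding c'_def using S0 adm finite_card_subsets
    by (intro member_le_sum) (auto simp: admissible_weights_def)
  then show "admissible_weights N m c'"
    using adm S0 card_subsets_remove_Max(1)[OF S0(1)]
    by (auto simp: admissible_weights_def c'_def intro!: sum_nonneg bexI[of _ "S0 - {Max S0}"])
qed

lemma ae_convergent_of_weighted_sum:
  "admissible_weights N m c \<Longrightarrow> ae_convergent M (N + r) (weighted_sum N m r c u) \<Longrightarrow> ae_convergent M (m + r) u"
proof (induction m arbitrary: N r c u)
  case 0
  then show ?case
    by (simp add: ae_convergent_weighted_sum_zero)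
next
  case (Suc m)
  obtain p c' where "admissible_weights p m c'"
    "ae_convergent M (p + Suc (Suc r)) (weighted_sum p m (Suc (Suc r)) c' (kernel_difference (Suc m + r) m u))"
    using ae_convergent_weighted_sum_pivot[OF Suc.prems] .
  then have "ae_convergent M (Suc m + Suc r) (kernel_difference (Suc m + r) m u)"
    using Suc.IH by fastforce
  then obtain c'' where "admissible_weights N m c''" "ae_convergent M (N + Suc r) (weighted_sum N m (Suc r) c'' u)"
    using ae_convergent_weighted_sum_remove_Max[OF Suc.prems] by blast
  then show ?case
    using Suc.IH by fastforce
qed

end

section \<open>Generalized means\<close>

lemma sub_tuple_eq_reindex:
  "S \<in> card_subsets N m \<Longrightarrow> sub_tuple S x = reindex m (kernel_coord N m S) x"
  by (auto simp: sub_tuple_def reindex_def kernel_coord_def card_subsets_def)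

lemma gen_mean_eq_weighted_sum:
  "gen_mean N m (u n) x = weighted_sum N m 0 (\<lambda>_. 1 / real (N choose m)) u n x"
  unfolding gen_mean_def weighted_sum_def card_subsets_def[symmetric]
  by (simp add: sum_divide_distrib sub_tuple_eq_reindex cong: sum.cong)

lemma ex_AE_LIMSEQ_iff_AE_convergent:
  "(\<exists>L. AE x in Q. (\<lambda>n. f n x) \<longlonglongrightarrow> L x) \<longleftrightarrow> (AE x in Q. convergent (\<lambda>n. f n x :: real))"
proof
  assume "\<exists>L. AE x in Q. (\<lambda>n. f n x) \<longlonglongrightarrow> L x"
  then obtain L where "AE x in Q. (\<lambda>n. f n x) \<longlonglongrightarrow> L x"
    by blast
  then show "AE x in Q. convergent (\<lambda>n. f n x)"
    by eventually_elim (auto simp: convergent_def)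
next
  assume "AE x in Q. convergent (\<lambda>n. f n x)"
  then have "AE x in Q. (\<lambda>n. f n x) \<longlonglongrightarrow> lim (\<lambda>n. f n x)"
    by eventually_elim (simp add: convergent_LIMSEQ_iff)
  then show "\<exists>L. AE x in Q. (\<lambda>n. f n x) \<longlonglongrightarrow> L x"
    by (intro exI[where x="\<lambda>x. lim (\<lambda>n. f n x)"])
qed

theorem theorem1:
  fixes M :: "'a measure" and N m :: nat and u :: "nat \<Rightarrow> (nat \<Rightarrow> 'a) \<Rightarrow> real"
  assumes "complete_measure M" and "sigma_finite_measure M"
    and "emeasure M (space M) \<noteq> 0"
    and "1 \<le> m" and "m \<le> N"
  shows "(\<exists>U :: (nat \<Rightarrow> 'a) \<Rightarrow> real.
            AE x in prod_compl N M. (\<lambda>n. gen_mean N m (u n) x) \<longlonglongrightarrow> U x)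
     \<longleftrightarrow> (\<exists>v :: (nat \<Rightarrow> 'a) \<Rightarrow> real.
            AE y in prod_compl m M. (\<lambda>n. u n y) \<longlonglongrightarrow> v y)"
proof -
  interpret nonzero_sigma_finite_measure M
    using assms(2,3) by (simp add: nonzero_sigma_finite_measure_def nonzero_sigma_finite_measure_axioms_def)
  define c where "c = (\<lambda>_ :: nat set. 1 / real (N choose m))"
  have "admissible_weights N m c"
    using \<open>m \<le> N\<close> by (auto simp: admissible_weights_def c_def card_subsets_def intro!: exI[of _ "{..<m}"])
  then have "ae_convergent M N (weighted_sum N m 0 c u) \<longleftrightarrow> ae_convergent M m u"
    using ae_convergent_of_weighted_sum[of N m c 0 u] ae_convergent_weighted_sum[of m 0 u N c] by auto
  then show ?thesis
    unfolding prod_compl_def AE_completion_iff ex_AE_LIMSEQ_iff_AE_convergent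
    by (simp add: ae_convergent_def gen_mean_eq_weighted_sum c_def)
qed

end
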